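(* Let $V$ be an $\mathcal{H}$-module vertex algebra. Set $L_1^{+}V=\sum_{n\ge1}L_1^{(n)}V$ and $L_{-1}^{+}V=\sum_{n\ge1}L_{-1}^{(n)}V$ (both $\mathbb{Z}$-graded subspaces of $V$), and denote by $(\cdot)_0$ their degree-zero parts. Then $(L_{-1}^{+}V)_0\subset (L_1^{+}V)_0$.
   Context: Throughout, $\mathbb{F}$ is an algebraically closed field of odd prime characteristic $p$; vertex algebras are over $\mathbb{F}$. Every vertex algebra $V$ is a module for the bialgebra $\mathcal{B}$ with basis $\{\mathcal{D}^{(n)}\}_{n\in\mathbb{N}}$, $\mathcal{D}^{(m)}\mathcal{D}^{(n)}=\binom{m+n}{n}\mathcal{D}^{(m+n)}$, via $\mathcal{D}^{(n)}v=v_{-n-1}\mathbf{1}$. $\mathcal{H}$: let $\mathfrak{sl}_2$ over $\mathbb{C}$ have basis $L_{-1},L_0,L_1$ with $[L_1,L_{-1}]=2L_0$, $[L_0,L_{\pm1}]=\mp L_{\pm1}$; put $L_{\pm1}^{(n)}=L_{\pm1}^n/n!$, $L_0^{(n)}=\binom{-2L_0}{n}$ in $U(\mathfrak{sl}_2)$; $U(\mathfrak{sl}_2)_{\mathbb{Z}}$ is the $\mathbb{Z}$-span of the $L_{-1}^{(i)}L_0^{(j)}L_1^{(k)}$, and $\mathcal{H}=\mathbb{F}\otimes_{\mathbb{Z}}U(\mathfrak{sl}_2)_{\mathbb{Z}}$. $e^{zL_{\pm1}}=\sum_{n\ge0}z^nL_{\pm1}^{(n)}$. For $v$ homogeneous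 of degree $n$, $f(z)^{\deg}v:=f(z)^nv$, extended linearly. A $\mathbb{Z}$-graded vertex algebra: $V=\bigoplus V_n$, $\mathbf{1}\in V_0$, $u_rV_n\subset V_{m+n-r-1}$ for $u\in V_m$. A $\mathbb{Z}$-graded weight $\mathcal{H}$-module: $W=\bigoplus W_n$ with $\mathcal{H}$-action, $L_{\pm1}^{(r)}W_n\subset W_{n\mp r}$, $L_0^{(r)}|_{W_n}=\binom{-2n}{r}$. An $\mathcal{H}$-module vertex algebra: a $\mathbb{Z}$-graded vertex algebra $V$ which is a $\mathbb{Z}$-graded weight $\mathcal{H}$-module with $L_{-1}^{(n)}=\mathcal{D}^{(n)}$, such that $V_n=0$ for $n\ll0$, $L_1^{(n)}\mathbf{1}=\delta_{n,0}\mathbf{1}$, and $e^{zL_1}Y(v,z_0)e^{-zL_1}=Y\bigl(e^{z(1-zz_0)L_1}(1-zz_0)^{-2\deg}v,z_0/(1-zz_0)\bigr)$ for $v\in V$. *)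

theory Defs
  imports "HOL-Computational_Algebra.Polynomial"
begin

text \<open>Integer binomial coefficient binom(r,i) for an integer upper argument r,
  i.e. r(r-1)...(r-i+1)/i!, which is an integer.\<close>
definition ibinom :: "int \<Rightarrow> nat \<Rightarrow> int" where
  "ibinom r i = (if 0 \<le> r then int (nat r choose i)
                 else (-1) ^ i * int (nat (- r) + i - 1 choose i))"

text \<open>A vertex algebra over the field 'a on the vector space 'v (scalar multiplication sc),
  given by the products u_r v = Y u r v and the vacuum vac. Axioms: bilinearity,
  truncation, vacuum axioms and the Borcherds (Jacobi) identity in components
  (all sums are finite; we require equality of the stabilised partial sums).\<close>
definition vertex_algebra ::
  "('a::field \<Rightarrow> 'v::ab_group_add \<Rightarrow> 'v) \<Rightarrow> ('v \<Rightarrow> int \<Rightarrow> 'v \<Rightarrow> 'v) \<Rightarrow> 'v \<Rightarrow> bool" where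
  "vertex_algebra sc Y vac \<longleftrightarrow>
     vector_space sc \<and>
     (\<forall>u r. Vector_Spaces.linear sc sc (Y u r)) \<and>
     (\<forall>r v. Vector_Spaces.linear sc sc (\<lambda>u. Y u r v)) \<and>
     (\<forall>u v. \<exists>N. \<forall>r\<ge>N. Y u r v = 0) \<and>
     (\<forall>r v. Y vac r v = (if r = -1 then v else 0)) \<and>
     (\<forall>v r. r \<ge> 0 \<longrightarrow> Y v r vac = 0) \<and>
     (\<forall>v. Y v (-1) vac = v) \<and>
     (\<forall>u v w m n r. \<exists>N. \<forall>M\<ge>N.
        (\<Sum>i\<le>M. sc (of_int (ibinom m i)) (Y (Y u (r + int i) v) (m + n - int i) w))
      = (\<Sum>i\<le>M. sc (of_int ((-1) ^ i * ibinom r i))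
            (Y u (m + r - int i) (Y v (n + int i) w)
             - sc (of_int ((-1) ^ nat \<bar>r\<bar>)) (Y v (n + r - int i) (Y u (m + int i) w)))))"

definition Dop :: "('v \<Rightarrow> int \<Rightarrow> 'v \<Rightarrow> 'v) \<Rightarrow> 'v \<Rightarrow> nat \<Rightarrow> 'v \<Rightarrow> 'v" where
  "Dop Y vac n v = Y v (- int n - 1) vac"

definition graded_space ::
  "('a::field \<Rightarrow> 'v::ab_group_add \<Rightarrow> 'v) \<Rightarrow> (int \<Rightarrow> 'v set) \<Rightarrow> bool" where
  "graded_space sc Vg \<longleftrightarrow>
     (\<forall>n. module.subspace sc (Vg n)) \<and>
     (\<forall>v. \<exists>!c::int \<Rightarrow> 'v. finite {n. c n \<noteq> 0} \<and> (\<forall>n. c n \<in> Vg n) \<and>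
            v = (\<Sum>n\<in>{n. c n \<noteq> 0}. c n))"

definition graded_vertex_algebra ::
  "('a::field \<Rightarrow> 'v::ab_group_add \<Rightarrow> 'v) \<Rightarrow> ('v \<Rightarrow> int \<Rightarrow> 'v \<Rightarrow> 'v) \<Rightarrow> 'v \<Rightarrow> (int \<Rightarrow> 'v set) \<Rightarrow> bool" where
  "graded_vertex_algebra sc Y vac Vg \<longleftrightarrow>
     vertex_algebra sc Y vac \<and> graded_space sc Vg \<and> vac \<in> Vg 0 \<and>
     (\<forall>m n u v r. u \<in> Vg m \<longrightarrow> v \<in> Vg n \<longrightarrow> Y u r v \<in> Vg (m + n - r - 1))"

text \<open>Z-graded weight H-module structure on the graded space (sc, Vg):
  Lm n is the action of L_{-1}^(n), Lp n the action of L_1^(n); L_0^(r) acts on Vg n by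
  the scalar binom(-2n, r). The H-module axioms are expressed by the defining relations
  of the hyperalgebra H = F \<otimes> U(sl_2)_Z on a weight module: divided power relations
  for L_{\<plusminus>1} and the Kostant straightening relation
  L_{-1}^(a) L_1^(b) = \<Sum>_k (-1)^k binom(-2L_0 ... ) L_1^(b-k) L_{-1}^(a-k)
  (with sl_2-triple e = L_{-1}, f = -L_1, h = 2L_0), evaluated on Vg n.\<close>
definition graded_weight_H_module ::
  "('a::field \<Rightarrow> 'v::ab_group_add \<Rightarrow> 'v) \<Rightarrow> (int \<Rightarrow> 'v set) \<Rightarrow>
   (nat \<Rightarrow> 'v \<Rightarrow> 'v) \<Rightarrow> (nat \<Rightarrow> 'v \<Rightarrow> 'v) \<Rightarrow> bool" where
  "graded_weight_H_module sc Vg Lm Lp \<longleftrightarrow>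
     graded_space sc Vg \<and>
     (\<forall>r. Vector_Spaces.linear sc sc (Lm r)) \<and> (\<forall>r. Vector_Spaces.linear sc sc (Lp r)) \<and>
     (\<forall>v. Lm 0 v = v) \<and> (\<forall>v. Lp 0 v = v) \<and>
     (\<forall>a b v. Lm a (Lm b v) = sc (of_nat ((a + b) choose b)) (Lm (a + b) v)) \<and>
     (\<forall>a b v. Lp a (Lp b v) = sc (of_nat ((a + b) choose b)) (Lp (a + b) v)) \<and>
     (\<forall>r n v. v \<in> Vg n \<longrightarrow> Lm r v \<in> Vg (n + int r)) \<and>
     (\<forall>r n v. v \<in> Vg n \<longrightarrow> Lp r v \<in> Vg (n - int r)) \<and>
     (\<forall>a b n v. v \<in> Vg n \<longrightarrow>
        Lm a (Lp b v) = (\<Sum>k\<le>min a b.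
          sc (of_int ((-1) ^ k * ibinom (2 * n + int a - int b) k)) (Lp (b - k) (Lm (a - k) v))))"

text \<open>The conjugation formula
  e^{zL_1} Y(v,z_0) e^{-zL_1} = Y(e^{z(1-zz_0)L_1}(1-zz_0)^{-2deg} v, z_0/(1-zz_0))
  is stated through the coefficient of z^N z_0^{-s-1} applied to w, for v homogeneous
  of degree d:
  \<Sum>_{a+b=N} (-1)^b L_1^(a) v_s L_1^(b) w = \<Sum>_{k=0}^N (-1)^k binom(s+N+1-2d, k) (L_1^(N-k) v)_{s+k} w.\<close>
definition H_module_vertex_algebra ::
  "('a::field \<Rightarrow> 'v::ab_group_add \<Rightarrow> 'v) \<Rightarrow> ('v \<Rightarrow> int \<Rightarrow> 'v \<Rightarrow> 'v) \<Rightarrow> 'v \<Rightarrow> (int \<Rightarrow> 'v set) \<Rightarrow>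
   (nat \<Rightarrow> 'v \<Rightarrow> 'v) \<Rightarrow> (nat \<Rightarrow> 'v \<Rightarrow> 'v) \<Rightarrow> bool" where
  "H_module_vertex_algebra sc Y vac Vg Lm Lp \<longleftrightarrow>
     graded_vertex_algebra sc Y vac Vg \<and>
     graded_weight_H_module sc Vg Lm Lp \<and>
     (\<forall>n v. Lm n v = Dop Y vac n v) \<and>
     (\<exists>N. \<forall>n<N. Vg n = {0}) \<and>
     (\<forall>n. Lp n vac = (if n = 0 then vac else 0)) \<and>
     (\<forall>d v. v \<in> Vg d \<longrightarrow> (\<forall>N s w.
        (\<Sum>a\<le>N. sc (of_int ((-1) ^ (N - a))) (Lp a (Y v s (Lp (N - a) w))))
      = (\<Sum>k\<le>N. sc (of_int ((-1) ^ k * ibinom (s + int N + 1 - 2 * d) k))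
                    (Y (Lp (N - k) v) (s + int k) w))))"

definition plus_part ::
  "('a::field \<Rightarrow> 'v::ab_group_add \<Rightarrow> 'v) \<Rightarrow> (nat \<Rightarrow> 'v \<Rightarrow> 'v) \<Rightarrow> 'v set" where
  "plus_part sc T = module.span sc (\<Union>n\<in>{1..}. range (T n))"

end

theory Submission
  imports Defs
begin

text \<open>
  Take the coefficient of z^n z_0^(2n) in the conjugation formula for w in V_(-n), applied to the
  vacuum. As L_1^(a) kills the vacuum for a > 0, it reads
    L_1^(n) L_(-1)^(2n) w = (-1)^n L_(-1)^(n) w
      + sum over k < n of (-1)^k (n choose k) L_(-1)^(2n-k) L_1^(n-k) w,
  where L_1^(n-k) w has degree -(2n-k) < -n. Since V is bounded below, a downward induction
  on n gives L_(-1)^(n) V_(-n) \<subseteq> L_1^+ V for n \<ge> 1, and these spaces span the degree-zero part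
  of L_(-1)^+ V.
\<close>

lemma linear_apply_0: "Vector_Spaces.linear s1 s2 f \<Longrightarrow> f 0 = 0"
  by (simp add: linear_iff_module_hom module_hom.zero)

locale graded_vector_space = vector_space scale
  for scale :: "'a::field \<Rightarrow> 'v::ab_group_add \<Rightarrow> 'v" +
  fixes Vg :: "int \<Rightarrow> 'v set"
  assumes graded_space: "graded_space scale Vg"
begin

lemma subspace_Vg: "subspace (Vg n)"
  using graded_space by (simp add: graded_space_def)

definition decomposition :: "'v \<Rightarrow> (int \<Rightarrow> 'v) \<Rightarrow> bool" where
  "decomposition v c \<longleftrightarrow>
     finite {n. c n \<noteq> 0} \<and> (\<forall>n. c n \<in> Vg n) \<and> v = (\<Sum>n\<in>{n. c n \<noteq> 0}. c n)"

definition component :: "'v \<Rightarrow> int \<Rightarrow> 'v" where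
  "component v = (THE c. decomposition v c)"

lemma ex1_decomposition: "\<exists>!c. decomposition v c"
  using graded_space unfolding graded_space_def decomposition_def by blast

lemma decomposition_component: "decomposition v (component v)"
  unfolding component_def by (rule theI' [OF ex1_decomposition])

lemma component_in_Vg: "component v n \<in> Vg n"
  using decomposition_component by (simp add: decomposition_def)

lemma finite_component_support: "finite {n. component v n \<noteq> 0}"
  using decomposition_component by (simp add: decomposition_def)

lemma sum_component:
  assumes "finite F" and "{n. component v n \<noteq> 0} \<subseteq> F"
  shows "(\<Sum>n\<in>F. component v n) = v"
proof -
  have "(\<Sum>n\<in>F. component v n) = (\<Sum>n\<in>{n. component v n \<noteq> 0}. component v n)"
    using assms by (intro sum.mono_neutral_right) auto
  also have "\<dots> = v"
    using decomposition_component by (simp add: decomposition_def)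
  finally show ?thesis .
qed

lemma component_eqI:
  assumes "finite F" and "\<And>n. c n \<in> Vg n" and "\<And>n. n \<notin> F \<Longrightarrow> c n = 0"
    and "v = sum c F"
  shows "component v = c"
proof -
  have support: "{n. c n \<noteq> 0} \<subseteq> F" using assms(3) by blast
  then have "sum c F = sum c {n. c n \<noteq> 0}"
    using assms(1) by (intro sum.mono_neutral_right) auto
  then have "decomposition v c"
    using support assms by (auto simp: decomposition_def finite_subset)
  then show ?thesis
    using ex1_decomposition decomposition_component by blast
qed

lemma component_homogeneous:
  assumes "v \<in> Vg d"
  shows "component v e = (if e = d then v else 0)"
proof -
  have "component v = (\<lambda>n. if n = d then v else 0)"
    by (rule component_eqI [of "{d}"]) (use assms subspace_0 [OF subspace_Vg] in auto)
  then show ?thesis by simp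
qed

lemma component_add: "component (u + v) e = component u e + component v e"
proof -
  let ?F = "{n. component u n \<noteq> 0} \<union> {n. component v n \<noteq> 0}"
  have "component (u + v) = (\<lambda>n. component u n + component v n)"
    by (rule component_eqI [of ?F])
      (auto simp: finite_component_support sum.distrib sum_component component_in_Vg
        intro: subspace_add [OF subspace_Vg])
  then show ?thesis by simp
qed

lemma component_scale: "component (scale c v) e = scale c (component v e)"
proof -
  let ?F = "{n. component v n \<noteq> 0}"
  have "component (scale c v) = (\<lambda>n. scale c (component v n))"
    by (rule component_eqI [of ?F])
      (auto simp: finite_component_support sum_component component_in_Vg
        simp flip: scale_sum_right intro: subspace_scale [OF subspace_Vg])
  then show ?thesis by simp
qed

lemma linear_component: "Vector_Spaces.linear scale scale (\<lambda>v. component v e)"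
  by (simp add: Vector_Spaces.linear_iff vector_space_axioms component_add component_scale)

lemma component_shift:
  assumes f: "Vector_Spaces.linear scale scale f" and shift: "\<And>n v. v \<in> Vg n \<Longrightarrow> f v \<in> Vg (n + k)"
  shows "component (f u) e = f (component u (e - k))"
proof -
  interpret f: Vector_Spaces.linear scale scale f by (fact f)
  let ?S = "{n. component u n \<noteq> 0}"
  have "component (f u) = (\<lambda>n. f (component u (n - k)))"
  proof (rule component_eqI [of "(\<lambda>n. n + k) ` ?S"])
    fix n
    show "f (component u (n - k)) \<in> Vg n"
      using shift [OF component_in_Vg, of u "n - k"] by simp
    show "f (component u (n - k)) = 0" if "n \<notin> (\<lambda>n. n + k) ` ?S"
    proof -
      have "component u (n - k) = 0"
        using that by (metis (mono_tags) diff_add_cancel image_eqI mem_Collect_eq)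
      then show ?thesis by simp
    qed
  next
    have "(\<Sum>n\<in>(\<lambda>n. n + k) ` ?S. f (component u (n - k))) = f (\<Sum>n\<in>?S. component u n)"
      by (simp add: sum.reindex f.sum)
    then show "f u = (\<Sum>n\<in>(\<lambda>n. n + k) ` ?S. f (component u (n - k)))"
      by (simp add: sum_component finite_component_support)
  qed (simp add: finite_component_support)
  then show ?thesis by simp
qed

lemma subspace_plus_part: "subspace (plus_part scale T)"
  by (simp add: plus_part_def)

lemma span_Int_Vg_subset:
  assumes "subspace S" and "\<And>g. g \<in> G \<Longrightarrow> component g e \<in> S"
  shows "span G \<inter> Vg e \<subseteq> S"
proof
  fix y assume y: "y \<in> span G \<inter> Vg e"
  interpret component: Vector_Spaces.linear scale scale "\<lambda>v. component v e"
    by (rule linear_component)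
  have "subspace ((\<lambda>v. component v e) -` S)"
    using component.subspace_vimage [OF assms(1)] .
  then have "span G \<subseteq> (\<lambda>v. component v e) -` S"
    using assms(2) by (intro span_minimal) auto
  then show "y \<in> S"
    using y component_homogeneous [of y e e] by auto
qed

end

lemma H_module_vertex_algebra_graded_vector_space:
  assumes "H_module_vertex_algebra sc Y vac Vg Lm Lp"
  shows "graded_vector_space sc Vg"
  using assms unfolding H_module_vertex_algebra_def graded_vertex_algebra_def vertex_algebra_def
  by (simp add: graded_vector_space_def graded_vector_space_axioms_def)

locale H_module_VA = graded_vector_space sc Vg
  for sc :: "'a::field \<Rightarrow> 'v::ab_group_add \<Rightarrow> 'v" and Vg :: "int \<Rightarrow> 'v set" +
  fixes Y :: "'v \<Rightarrow> int \<Rightarrow> 'v \<Rightarrow> 'v" and vac :: 'v and Lm Lp :: "nat \<Rightarrow> 'v \<Rightarrow> 'v"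
  assumes H_module_vertex_algebra: "H_module_vertex_algebra sc Y vac Vg Lm Lp"
begin

lemma graded_vertex_algebra: "graded_vertex_algebra sc Y vac Vg"
  and graded_weight_H_module: "graded_weight_H_module sc Vg Lm Lp"
  and Lm_eq_Y: "Lm n v = Y v (- int n - 1) vac"
  and bounded_below: "\<exists>N. \<forall>n<N. Vg n = {0}"
  and Lp_vac: "Lp n vac = (if n = 0 then vac else 0)"
  and conjugation: "v \<in> Vg d \<Longrightarrow>
    (\<Sum>a\<le>N. sc (of_int ((-1) ^ (N - a))) (Lp a (Y v s (Lp (N - a) w))))
      = (\<Sum>k\<le>N. sc (of_int ((-1) ^ k * ibinom (s + int N + 1 - 2 * d) k))
                    (Y (Lp (N - k) v) (s + int k) w))"
  using H_module_vertex_algebra by (simp_all add: H_module_vertex_algebra_def Dop_def)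

lemma linear_Y: "Vector_Spaces.linear sc sc (Y u r)"
  using graded_vertex_algebra by (simp add: graded_vertex_algebra_def vertex_algebra_def)

lemma linear_Lm: "Vector_Spaces.linear sc sc (Lm r)"
  and linear_Lp: "Vector_Spaces.linear sc sc (Lp r)"
  and Lp_0: "Lp 0 v = v"
  and Lm_Vg: "v \<in> Vg n \<Longrightarrow> Lm r v \<in> Vg (n + int r)"
  and Lp_Vg: "v \<in> Vg n \<Longrightarrow> Lp r v \<in> Vg (n - int r)"
  using graded_weight_H_module by (simp_all add: graded_weight_H_module_def)

lemma Lp_Lm_double:
  assumes w: "w \<in> Vg (- int n)"
  shows "Lp n (Lm (2 * n) w) = sc (of_int ((-1) ^ n)) (Lm n w) +
    (\<Sum>k<n. sc (of_int ((-1) ^ k * int (n choose k))) (Lm (2 * n - k) (Lp (n - k) w)))"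
proof -
  define s where "s = - int (2 * n) - 1"
  have Y_vac: "Y u (s + int k) vac = Lm (2 * n - k) u" if "k \<le> n" for u k
    using that by (simp add: Lm_eq_Y s_def of_nat_diff algebra_simps)
  have degree: "s + int n + 1 - 2 * - int n = int n"
    by (simp add: s_def)
  have lhs: "(\<Sum>a\<le>n. sc (of_int ((-1) ^ (n - a))) (Lp a (Y w s (Lp (n - a) vac))))
      = Lp n (Lm (2 * n) w)"
  proof -
    have "Lp a (Y w s (Lp (n - a) vac)) = 0" if "a < n" for a
      using that by (simp add: Lp_vac linear_apply_0 [OF linear_Y] linear_apply_0 [OF linear_Lp])
    then show ?thesis
      using Y_vac [of 0 w] by (simp add: lessThan_Suc_atMost [symmetric] Lp_vac)
  qed
  have "(\<Sum>k\<le>n. sc (of_int ((-1) ^ k * ibinom (s + int n + 1 - 2 * - int n) k))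
                    (Y (Lp (n - k) w) (s + int k) vac))
      = (\<Sum>k\<le>n. sc (of_int ((-1) ^ k * int (n choose k))) (Lm (2 * n - k) (Lp (n - k) w)))"
    unfolding degree by (intro sum.cong) (simp_all add: ibinom_def Y_vac)
  also have "\<dots> = sc (of_int ((-1) ^ n)) (Lm n w) +
    (\<Sum>k<n. sc (of_int ((-1) ^ k * int (n choose k))) (Lm (2 * n - k) (Lp (n - k) w)))"
    by (simp add: lessThan_Suc_atMost [symmetric] Lp_0 mult_2)
  finally show ?thesis
    using conjugation [OF w, of n s vac] lhs by simp
qed

lemma Lm_in_plus_part_Lp_step:
  assumes n: "1 \<le> n" and w: "w \<in> Vg (- int n)"
    and higher: "\<And>m u. n < m \<Longrightarrow> u \<in> Vg (- int m) \<Longrightarrow> Lm m u \<in> plus_part sc Lp"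
  shows "Lm n w \<in> plus_part sc Lp"
proof -
  let ?S = "plus_part sc Lp"
  let ?rest = "\<Sum>k<n. sc (of_int ((-1) ^ k * int (n choose k))) (Lm (2 * n - k) (Lp (n - k) w))"
  have "Lp n (Lm (2 * n) w) \<in> ?S"
    using n unfolding plus_part_def by (intro span_base) auto
  moreover have "?rest \<in> ?S"
  proof (intro subspace_sum [OF subspace_plus_part] subspace_scale [OF subspace_plus_part])
    fix k assume "k \<in> {..<n}"
    moreover have "Lp (n - k) w \<in> Vg (- int (2 * n - k))"
      using Lp_Vg [OF w, of "n - k"] \<open>k \<in> {..<n}\<close> by simp
    ultimately show "Lm (2 * n - k) (Lp (n - k) w) \<in> ?S"
      by (intro higher) auto
  qed
  ultimately have "Lp n (Lm (2 * n) w) - ?rest \<in> ?S"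
    by (rule subspace_diff [OF subspace_plus_part])
  then have "sc (of_int ((-1) ^ n)) (Lm n w) \<in> ?S"
    by (simp add: Lp_Lm_double [OF w])
  then have "sc (of_int ((-1) ^ n)) (sc (of_int ((-1) ^ n)) (Lm n w)) \<in> ?S"
    by (rule subspace_scale [OF subspace_plus_part])
  moreover have "(of_int ((-1) ^ n) :: 'a) * of_int ((-1) ^ n) = 1"
    by (simp flip: of_int_mult power_mult_distrib)
  ultimately show ?thesis by simp
qed

lemma Lm_in_plus_part_Lp:
  assumes "1 \<le> n" and "w \<in> Vg (- int n)"
  shows "Lm n w \<in> plus_part sc Lp"
proof -
  obtain N where N: "\<And>m. m < N \<Longrightarrow> Vg m = {0}"
    using bounded_below by blast
  have low_degree: "Lm n w \<in> plus_part sc Lp" if "nat (- N) < n" and "w \<in> Vg (- int n)" for n w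
  proof -
    have "w = 0"
      using N [of "- int n"] that by simp
    then show ?thesis
      by (simp add: linear_apply_0 [OF linear_Lm] subspace_0 [OF subspace_plus_part])
  qed
  show ?thesis
    using assms
  proof (induction "nat (- N) - n" arbitrary: n w rule: less_induct)
    case less
    show ?case
    proof (rule Lm_in_plus_part_Lp_step [OF less.prems])
      fix m u assume "n < m" and u: "u \<in> Vg (- int m)"
      show "Lm m u \<in> plus_part sc Lp"
      proof (cases "nat (- N) < m")
        case True
        then show ?thesis using low_degree u by blast
      next
        case False
        then have "nat (- N) - m < nat (- N) - n"
          using \<open>n < m\<close> by simp
        then show ?thesis
          by (rule less.hyps) (use \<open>n < m\<close> u in auto)
      qed
    qed
  qed
qed

lemma plus_part_Lm_Int_Vg_0: "plus_part sc Lm \<inter> Vg 0 \<subseteq> plus_part sc Lp \<inter> Vg 0"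
proof -
  have "component g 0 \<in> plus_part sc Lp" if generator: "g \<in> (\<Union>n\<in>{1..}. range (Lm n))" for g
  proof -
    obtain n u where n: "1 \<le> n" and g: "g = Lm n u"
      using generator by auto
    have "component g 0 = Lm n (component u (- int n))"
      unfolding g using component_shift [OF linear_Lm Lm_Vg, of n u 0] by simp
    then show ?thesis
      using Lm_in_plus_part_Lp [OF n component_in_Vg] by simp
  qed
  then have "plus_part sc Lm \<inter> Vg 0 \<subseteq> plus_part sc Lp"
    unfolding plus_part_def [of sc Lm] by (rule span_Int_Vg_subset [OF subspace_plus_part])
  then show ?thesis by blast
qed

end

theorem lemma4p9:
  fixes sc :: "'a::alg_closed_field \<Rightarrow> 'v::ab_group_add \<Rightarrow> 'v"
    and Y :: "'v \<Rightarrow> int \<Rightarrow> 'v \<Rightarrow> 'v" and vac :: 'v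
    and Vg :: "int \<Rightarrow> 'v set" and Lm Lp :: "nat \<Rightarrow> 'v \<Rightarrow> 'v"
    and p :: nat
  assumes "prime p" and "odd p" and "CHAR('a) = p"
    and "H_module_vertex_algebra sc Y vac Vg Lm Lp"
  shows "plus_part sc Lm \<inter> Vg 0 \<subseteq> plus_part sc Lp \<inter> Vg 0"
proof -
  interpret H_module_VA sc Vg Y vac Lm Lp
    using assms(4) H_module_vertex_algebra_graded_vector_space
    by (simp add: H_module_VA_def H_module_VA_axioms_def)
  show ?thesis
    by (rule plus_part_Lm_Int_Vg_0)
qed

end
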